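(* Let $\mathcal{S}$ be an instance space, $\mathcal{W}$ a hypothesis space, and $\ell:\mathcal{S}\times\mathcal{W}\to\mathbb{R}^+$ a nonnegative loss function. Let $\mathbf{S}=(S_1,\ldots,S_n)$ have law $\pi^{\otimes n}$ for an (unknown) distribution $\pi$ on $\mathcal{S}$, and let $W\in\mathcal{W}$ be produced by a learning algorithm $\mathcal{A}$ given by a conditional distribution $P_{W|\mathbf{S}}$; let $P_W$ denote the marginal law of $W$. Let $(\bar S,\bar W)\sim \pi\otimes P_W$ (independent) and let $\Lambda(\lambda)=\log\mathbb{E}\big[e^{\lambda(\ell(\bar S,\bar W)-\mathbb{E}[\ell(\bar S,\bar W)])}\big]$ be the cumulant generating function of $\ell(\bar S,\bar W)$. Suppose that for some $b_+\in(0,\infty]$ there is a convex $\psi_+:[0,b_+)\to\mathbb{R}$ with $\psi_+(0)=\psi_+'(0)=0$ and $\Lambda(\lambda)\le\psi_+(\lambda)$ for all $\lambda\in[0,b_+)$, and that for some $b_-\in(0,\infty]$ there is a convex $\psi_-:[0,b_-)\to\mathbb{R}$ with $\psi_-(0)=\psi_-'(0)=0$ and $\Lambda(\lambda)\le\psi_-(-\lambda)$ for all $\lambda\in(-b_-,0]$. Then \[ -\frac{1}{n}\sum_{i=1}^n \psi_+^{\ast-1}\big(I(S_i;W)\big)\;\le\;{\rm gen}(\pi,\mathcal{A})\;\le\;\frac{1}{n}\sum_{i=1}^n \psi_-^{\ast-1}\big(I(S_i;W)\big). \]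
   Context: For a hypothesis $w$, the true risk is $L_\pi(w)=\mathbb{E}_{S\sim\pi}[\ell(S,w)]$ and the empirical risk is $L_{\mathbf{S}}(w)=\frac1n\sum_{i=1}^n\ell(S_i,w)$. The expected generalization error is ${\rm gen}(\pi,\mathcal{A})=\mathbb{E}[L_\pi(W)-L_{\mathbf{S}}(W)]$, with the expectation over $(\mathbf{S},W)\sim\pi^{\otimes n}P_{W|\mathbf{S}}$. $I(\cdot;\cdot)$ denotes mutual information. For a convex $\psi:[0,b)\to\mathbb{R}$, $\psi^\ast(x)=\sup_{\lambda\in[0,b)}(\lambda x-\psi(\lambda))$ is its Legendre dual and $\psi^{\ast-1}$ denotes the inverse of $\psi^\ast$ (on $[0,\infty)$). *)

theory Defs
  imports "HOL-Probability.Probability"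
begin

definition sample_space :: "nat \<Rightarrow> 's measure \<Rightarrow> (nat \<Rightarrow> 's) measure" where
  "sample_space n \<pi> = PiM {..<n} (\<lambda>_. \<pi>)"

text \<open>Joint law of (S, W) = pi^n P_{W|S}; K is the kernel P_{W|S}.\<close>
definition joint_law ::
  "nat \<Rightarrow> 's measure \<Rightarrow> 'w measure \<Rightarrow> ((nat \<Rightarrow> 's) \<Rightarrow> 'w measure) \<Rightarrow> ((nat \<Rightarrow> 's) \<times> 'w) measure" where
  "joint_law n \<pi> MW K =
     sample_space n \<pi> \<bind> (\<lambda>s. distr (K s) (sample_space n \<pi> \<Otimes>\<^sub>M MW) (\<lambda>w. (s, w)))"

definition output_law ::
  "nat \<Rightarrow> 's measure \<Rightarrow> 'w measure \<Rightarrow> ((nat \<Rightarrow> 's) \<Rightarrow> 'w measure) \<Rightarrow> 'w measure" where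
  "output_law n \<pi> MW K = distr (joint_law n \<pi> MW K) MW snd"

definition true_risk :: "'s measure \<Rightarrow> ('s \<Rightarrow> 'w \<Rightarrow> real) \<Rightarrow> 'w \<Rightarrow> real" where
  "true_risk \<pi> loss w = (\<integral>z. loss z w \<partial>\<pi>)"

definition emp_risk :: "nat \<Rightarrow> ('s \<Rightarrow> 'w \<Rightarrow> real) \<Rightarrow> (nat \<Rightarrow> 's) \<Rightarrow> 'w \<Rightarrow> real" where
  "emp_risk n loss s w = (1 / real n) * (\<Sum>i<n. loss (s i) w)"

definition gen_err ::
  "nat \<Rightarrow> 's measure \<Rightarrow> 'w measure \<Rightarrow> ((nat \<Rightarrow> 's) \<Rightarrow> 'w measure) \<Rightarrow> ('s \<Rightarrow> 'w \<Rightarrow> real) \<Rightarrow> real" where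
  "gen_err n \<pi> MW K loss =
     (\<integral>z. true_risk \<pi> loss (snd z) - emp_risk n loss (fst z) (snd z) \<partial>joint_law n \<pi> MW K)"

definition mi_SiW ::
  "nat \<Rightarrow> 's measure \<Rightarrow> 'w measure \<Rightarrow> ((nat \<Rightarrow> 's) \<Rightarrow> 'w measure) \<Rightarrow> nat \<Rightarrow> real" where
  "mi_SiW n \<pi> MW K i =
     prob_space.mutual_information (joint_law n \<pi> MW K) (exp 1) \<pi> MW (\<lambda>z. fst z i) snd"

definition dom0 :: "ereal \<Rightarrow> real set" where
  "dom0 b = {x. 0 \<le> x \<and> ereal x < b}"

definition legendre_dual :: "(real \<Rightarrow> real) \<Rightarrow> ereal \<Rightarrow> real \<Rightarrow> ereal" where
  "legendre_dual \<psi> b x = (SUP t\<in>dom0 b. ereal (t * x - \<psi> t))"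

text \<open>Inverse of psi^* on [0,infinity) (generalized inverse; coincides with the inverse
  where psi^* is a bijection).\<close>
definition legendre_dual_inv :: "(real \<Rightarrow> real) \<Rightarrow> ereal \<Rightarrow> real \<Rightarrow> real" where
  "legendre_dual_inv \<psi> b y = Inf {x. 0 \<le> x \<and> ereal y < legendre_dual \<psi> b x}"

end

theory Submission
  imports Defs
begin

(*
  The Donsker--Varadhan variational formula, applied to the law of (S_i, W) against
  the product \<pi> \<otimes> P_W of its marginals, gives for every \<lambda> \<in> [0, b\<^sub>+)
    \<lambda> (E \<ell>(S_i, W) - E \<ell>(S', W')) \<le> I(S_i; W) + \<Lambda>(\<lambda>) \<le> I(S_i; W) + \<psi>\<^sub>+(\<lambda>),
  and any d with \<lambda> d \<le> I + \<psi>(\<lambda>) for all such \<lambda> is at most \<psi>\<^sup>*\<^sup>-\<^sup>1(I).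
  Averaging over i, and using that E \<ell>(S', W') is the expected true risk, bounds gen from
  below; the lower tail with \<psi>\<^sub>- bounds it from above. Since \<psi>\<^sup>*\<^sup>-\<^sup>1 is the generalised
  inverse, the last implication holds for any \<psi>: convexity of \<psi>\<^sub>\<plusminus> and the conditions at 0
  are never used.
*)

lemma mult_le_entropy_plus_exp:
  fixes p a :: real
  assumes "0 \<le> p"
  shows "p * a \<le> p * ln p - p + exp a"
proof (cases "p = 0")
  case False
  with assms have p_pos: "0 < p" by simp
  have "p * (1 + (a - ln p)) \<le> p * exp (a - ln p)"
    using p_pos exp_ge_add_one_self by (intro mult_left_mono) auto
  also have "p * exp (a - ln p) = exp a"
    using p_pos by (simp add: exp_diff)
  finally show ?thesis by (simp add: algebra_simps)
qed simp

lemma absolutely_continuous_real_density: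
  assumes Q: "prob_space Q" and N: "prob_space N" and sets_eq: "sets N = sets Q"
    and ac: "absolutely_continuous Q N"
  obtains p where "p \<in> borel_measurable Q" and "\<And>x. 0 \<le> p x"
    and "N = density Q (\<lambda>x. ennreal (p x))"
    and "entropy_density (exp 1) Q N = (\<lambda>x. ln (p x))"
proof
  interpret Q: prob_space Q by fact
  let ?p = "\<lambda>x. enn2real (RN_deriv Q N x)"
  show "?p \<in> borel_measurable Q" by measurable
  show "0 \<le> ?p x" for x by simp
  show "entropy_density (exp 1) Q N = (\<lambda>x. ln (?p x))"
    by (simp add: entropy_density_def log_def fun_eq_iff)
  have "N = density Q (RN_deriv Q N)"
    using Q.density_RN_deriv[OF ac sets_eq] by simp
  also have "\<dots> = density Q (\<lambda>x. ennreal (?p x))"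
  proof (rule density_cong)
    show "AE x in Q. RN_deriv Q N x = ennreal (?p x)"
      using Q.RN_deriv_finite[OF prob_space_imp_sigma_finite[OF N] ac sets_eq]
      by eventually_elim (simp add: less_top)
  qed auto
  finally show "N = density Q (\<lambda>x. ennreal (?p x))" .
qed

lemma donsker_varadhan_le:
  fixes f :: "'a \<Rightarrow> real"
  assumes Q: "prob_space Q" and N: "prob_space N" and sets_eq: "sets N = sets Q"
    and ac: "absolutely_continuous Q N"
    and finite_KL: "integrable N (entropy_density (exp 1) Q N)"
    and f[measurable]: "f \<in> borel_measurable Q" and int_f: "integrable N f"
    and int_exp: "integrable Q (\<lambda>x. exp (f x))"
  shows "(\<integral>x. f x \<partial>N) \<le> KL_divergence (exp 1) Q N + ln (\<integral>x. exp (f x) \<partial>Q)"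
proof -
  interpret Q: prob_space Q by fact
  interpret N: prob_space N by fact
  obtain p where [measurable]: "p \<in> borel_measurable Q" and p_nonneg: "\<And>x. 0 \<le> p x"
    and N_eq: "N = density Q (\<lambda>x. ennreal (p x))"
    and entropy_eq: "entropy_density (exp 1) Q N = (\<lambda>x. ln (p x))"
    using absolutely_continuous_real_density[OF Q N sets_eq ac] by blast
  have integrable_N: "integrable N h \<longleftrightarrow> integrable Q (\<lambda>x. p x * h x)"
    and integral_N: "integral\<^sup>L N h = (\<integral>x. p x * h x \<partial>Q)"
    if "h \<in> borel_measurable Q" for h :: "'a \<Rightarrow> real"
    using that p_nonneg unfolding N_eq
    by (subst integrable_density integral_density; auto)+
  have int_pf: "integrable Q (\<lambda>x. p x * f x)"
    using int_f integrable_N[OF f] by simp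
  have int_p: "integrable Q p" and total_p: "(\<integral>x. p x \<partial>Q) = 1"
    using integrable_N[of "\<lambda>_. 1"] integral_N[of "\<lambda>_. 1"] N.prob_space by simp_all
  have int_plnp: "integrable Q (\<lambda>x. p x * ln (p x))"
    using finite_KL integrable_N[of "\<lambda>x. ln (p x)"] by (simp add: entropy_eq)
  have KL_eq: "KL_divergence (exp 1) Q N = (\<integral>x. p x * ln (p x) \<partial>Q)"
    using integral_N[of "\<lambda>x. ln (p x)"] by (simp add: KL_divergence_def entropy_eq)
  define Z where "Z = (\<integral>x. exp (f x) \<partial>Q)"
  have "Z \<noteq> 0"
  proof
    assume "Z = 0"
    then have "AE x in Q. exp (f x) = 0"
      using integral_nonneg_eq_0_iff_AE[OF int_exp] by (simp add: Z_def)
    then show False by (simp add: Q.emeasure_space_1)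
  qed
  then have Z_pos: "0 < Z"
    unfolding Z_def by (simp add: integral_nonneg_AE order_le_neq_trans)
  \<comment> \<open>Gibbs: integrate Young's inequality at f - ln Z against Q\<close>
  have "p x * (f x - ln Z) \<le> p x * ln (p x) - p x + exp (f x) / Z" for x
    using mult_le_entropy_plus_exp[OF p_nonneg, of x "f x - ln Z"] Z_pos by (simp add: exp_diff)
  then have "(\<integral>x. p x * (f x - ln Z) \<partial>Q) \<le> (\<integral>x. p x * ln (p x) - p x + exp (f x) / Z \<partial>Q)"
    using int_pf int_p int_plnp int_exp by (intro integral_mono) (auto simp: right_diff_distrib)
  then show ?thesis
    using int_pf int_p int_plnp int_exp Z_pos total_p integral_N[OF f]
    by (simp add: KL_eq right_diff_distrib Z_def[symmetric])
qed

lemma integrable_of_finite_KL_exp_moment: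
  fixes g :: "'a \<Rightarrow> real"
  assumes Q: "prob_space Q" and N: "prob_space N" and sets_eq: "sets N = sets Q"
    and ac: "absolutely_continuous Q N"
    and finite_KL: "integrable N (entropy_density (exp 1) Q N)"
    and g[measurable]: "g \<in> borel_measurable Q" and g_nonneg: "\<And>x. x \<in> space Q \<Longrightarrow> 0 \<le> g x"
    and t: "0 < t" and int_exp: "integrable Q (\<lambda>x. exp (t * g x))"
  shows "integrable N g"
proof -
  interpret N: prob_space N by fact
  obtain p where [measurable]: "p \<in> borel_measurable Q" and p_nonneg: "\<And>x. 0 \<le> p x"
    and N_eq: "N = density Q (\<lambda>x. ennreal (p x))"
    and entropy_eq: "entropy_density (exp 1) Q N = (\<lambda>x. ln (p x))"
    using absolutely_continuous_real_density[OF Q N sets_eq ac] by blast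
  have integrable_N: "integrable N h \<longleftrightarrow> integrable Q (\<lambda>x. p x * h x)"
    if "h \<in> borel_measurable Q" for h :: "'a \<Rightarrow> real"
    using that p_nonneg unfolding N_eq by (subst integrable_density) auto
  have int_p: "integrable Q p"
    using integrable_N[of "\<lambda>_. 1"] by simp
  have int_plnp: "integrable Q (\<lambda>x. p x * ln (p x))"
    using finite_KL integrable_N[of "\<lambda>x. ln (p x)"] by (simp add: entropy_eq)
  have "integrable Q (\<lambda>x. p x * g x)"
  proof (rule Bochner_Integration.integrable_bound)
    show "integrable Q (\<lambda>x. (p x * ln (p x) - p x + exp (t * g x)) / t)"
      using int_p int_plnp int_exp by auto
    show "AE x in Q. norm (p x * g x) \<le> norm ((p x * ln (p x) - p x + exp (t * g x)) / t)"
    proof (rule AE_I2)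
      fix x assume "x \<in> space Q"
      then have "0 \<le> p x * g x" using p_nonneg g_nonneg by simp
      moreover have "p x * (t * g x) \<le> p x * ln (p x) - p x + exp (t * g x)"
        by (rule mult_le_entropy_plus_exp[OF p_nonneg])
      ultimately have "p x * g x \<le> (p x * ln (p x) - p x + exp (t * g x)) / t"
        using t by (simp add: pos_le_divide_eq mult.commute mult.left_commute)
      then show "norm (p x * g x) \<le> norm ((p x * ln (p x) - p x + exp (t * g x)) / t)"
        using \<open>0 \<le> p x * g x\<close> by (smt (verit) real_norm_def)
    qed
  qed measurable
  then show ?thesis using integrable_N[OF g] by simp
qed

lemma le_legendre_dual_inv:
  fixes \<psi> :: "real \<Rightarrow> real" and b :: ereal
  assumes b: "0 < b" and bound: "\<And>t. t \<in> dom0 b \<Longrightarrow> t * d \<le> I + \<psi> t"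
  shows "d \<le> legendre_dual_inv \<psi> b I"
proof -
  obtain t0 where t0: "0 < t0" "t0 \<in> dom0 b"
    using ereal_dense2[OF b] by (force simp: dom0_def)
  define x0 where "x0 = (\<bar>I\<bar> + 1 + \<bar>\<psi> t0\<bar>) / t0"
  have "ereal I < ereal (t0 * x0 - \<psi> t0)" using t0 by (simp add: x0_def)
  also have "\<dots> \<le> legendre_dual \<psi> b x0"
    unfolding legendre_dual_def by (rule SUP_upper[OF t0(2)])
  finally have nonempty: "x0 \<in> {x. 0 \<le> x \<and> ereal I < legendre_dual \<psi> b x}"
    using t0 by (simp add: x0_def)
  show ?thesis unfolding legendre_dual_inv_def
  proof (rule cInf_greatest)
    fix x assume "x \<in> {x. 0 \<le> x \<and> ereal I < legendre_dual \<psi> b x}"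
    then obtain t where t: "t \<in> dom0 b" "I < t * x - \<psi> t"
      by (auto simp: legendre_dual_def less_SUP_iff)
    then have "t * d < t * x" using bound[OF t(1)] by simp
    then show "d \<le> x"
      using t(1) by (auto simp: dom0_def mult_less_cancel_left)
  qed (use nonempty in blast)
qed

lemma expectation_sub_le_legendre_dual_inv:
  fixes g :: "'a \<Rightarrow> real" and \<psi> :: "real \<Rightarrow> real"
  assumes Q: "prob_space Q" and N: "prob_space N" and sets_eq: "sets N = sets Q"
    and ac: "absolutely_continuous Q N"
    and finite_KL: "integrable N (entropy_density (exp 1) Q N)"
    and g[measurable]: "g \<in> borel_measurable Q" and int_g: "integrable N g"
    and b: "0 < b"
    and cgf: "\<And>t. t \<in> dom0 b \<Longrightarrow> integrable Q (\<lambda>x. exp (t * (g x - m))) \<and>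
                   ln (\<integral>x. exp (t * (g x - m)) \<partial>Q) \<le> \<psi> t"
  shows "(\<integral>x. g x \<partial>N) - m \<le> legendre_dual_inv \<psi> b (KL_divergence (exp 1) Q N)"
proof (rule le_legendre_dual_inv[OF b])
  interpret N: prob_space N by fact
  fix t assume t: "t \<in> dom0 b"
  have "(\<integral>x. t * (g x - m) \<partial>N)
      \<le> KL_divergence (exp 1) Q N + ln (\<integral>x. exp (t * (g x - m)) \<partial>Q)"
    using cgf[OF t] int_g by (intro donsker_varadhan_le[OF Q N sets_eq ac finite_KL]) auto
  moreover have "(\<integral>x. t * (g x - m) \<partial>N) = t * ((\<integral>x. g x \<partial>N) - m)"
    using int_g by (simp add: N.prob_space)
  ultimately show "t * ((\<integral>x. g x \<partial>N) - m) \<le> KL_divergence (exp 1) Q N + \<psi> t"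
    using cgf[OF t] by linarith
qed

lemma sub_expectation_le_legendre_dual_inv:
  fixes g :: "'a \<Rightarrow> real" and \<psi> :: "real \<Rightarrow> real"
  assumes Q: "prob_space Q" and N: "prob_space N" and sets_eq: "sets N = sets Q"
    and ac: "absolutely_continuous Q N"
    and finite_KL: "integrable N (entropy_density (exp 1) Q N)"
    and g[measurable]: "g \<in> borel_measurable Q" and int_g: "integrable N g"
    and b: "0 < b"
    and cgf: "\<And>t. - t \<in> dom0 b \<Longrightarrow> integrable Q (\<lambda>x. exp (t * (g x - m))) \<and>
                   ln (\<integral>x. exp (t * (g x - m)) \<partial>Q) \<le> \<psi> (- t)"
  shows "m - (\<integral>x. g x \<partial>N) \<le> legendre_dual_inv \<psi> b (KL_divergence (exp 1) Q N)"
proof -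
  have "(\<integral>x. - g x \<partial>N) - (- m) \<le> legendre_dual_inv \<psi> b (KL_divergence (exp 1) Q N)"
    using cgf[of "- t" for t] int_g
    by (intro expectation_sub_le_legendre_dual_inv[OF Q N sets_eq ac finite_KL _ _ b])
      (auto simp: algebra_simps)
  then show ?thesis by simp
qed

locale learning_algorithm =
  fixes n :: nat and \<pi> :: "'s measure" and MW :: "'w measure"
    and K :: "(nat \<Rightarrow> 's) \<Rightarrow> 'w measure"
  assumes prob_space_data: "prob_space \<pi>"
    and kernel_measurable: "K \<in> sample_space n \<pi> \<rightarrow>\<^sub>M prob_algebra MW"
begin

abbreviation "joint \<equiv> joint_law n \<pi> MW K"
abbreviation "PW \<equiv> output_law n \<pi> MW K"

definition pair_law :: "nat \<Rightarrow> ('s \<times> 'w) measure" where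
  "pair_law i = distr joint (\<pi> \<Otimes>\<^sub>M MW) (\<lambda>z. (fst z i, snd z))"

lemma prob_space_sample_space: "prob_space (sample_space n \<pi>)"
  unfolding sample_space_def using prob_space_data by (rule prob_space_PiM)

lemma prob_space_kernel:
  assumes "s \<in> space (sample_space n \<pi>)"
  shows "prob_space (K s)" and "sets (K s) = sets MW"
  using measurable_space[OF kernel_measurable assms] by (auto simp: space_prob_algebra)

lemma measurable_sample_component[measurable]:
  assumes "i < n"
  shows "(\<lambda>s. s i) \<in> sample_space n \<pi> \<rightarrow>\<^sub>M \<pi>"
  using assms unfolding sample_space_def by (intro measurable_component_singleton) simp

definition joint_kernel :: "(nat \<Rightarrow> 's) \<Rightarrow> ((nat \<Rightarrow> 's) \<times> 'w) measure" where
  "joint_kernel s = distr (K s) (sample_space n \<pi> \<Otimes>\<^sub>M MW) (\<lambda>w. (s, w))"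

lemma joint_law_eq_bind: "joint = sample_space n \<pi> \<bind> joint_kernel"
  unfolding joint_law_def joint_kernel_def ..

lemma measurable_joint_kernel:
  "joint_kernel \<in> sample_space n \<pi> \<rightarrow>\<^sub>M subprob_algebra (sample_space n \<pi> \<Otimes>\<^sub>M MW)"
  unfolding joint_kernel_def
  by (rule measurable_distr2[OF _ measurable_prob_algebraD[OF kernel_measurable]]) simp

lemma sets_joint_law: "sets joint = sets (sample_space n \<pi> \<Otimes>\<^sub>M MW)"
  unfolding joint_law_eq_bind
  using prob_space.not_empty[OF prob_space_sample_space]
  by (intro sets_bind) (auto simp: joint_kernel_def)

lemma prob_space_joint_law: "prob_space joint"
  unfolding joint_law_eq_bind
proof (rule prob_space.prob_space_bind[OF prob_space_sample_space _ measurable_joint_kernel])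
  show "AE s in sample_space n \<pi>. prob_space (joint_kernel s)"
    by (rule AE_I2) (auto simp: joint_kernel_def measurable_cong_sets[OF prob_space_kernel(2) refl]
        intro!: prob_space.prob_space_distr prob_space_kernel measurable_Pair2')
qed

lemma distr_joint_law_component:
  assumes i: "i < n"
  shows "distr joint \<pi> (\<lambda>z. fst z i) = \<pi>"
proof -
  have ne: "space (sample_space n \<pi>) \<noteq> {}"
    using prob_space.not_empty[OF prob_space_sample_space] .
  have "distr joint \<pi> (\<lambda>z. fst z i) = sample_space n \<pi> \<bind> (\<lambda>s. distr (joint_kernel s) \<pi> (\<lambda>z. fst z i))"
    unfolding joint_law_eq_bind using i by (intro distr_bind[OF measurable_joint_kernel ne]) measurable
  also have "\<dots> = sample_space n \<pi> \<bind> (\<lambda>s. return \<pi> (s i))"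
  proof (rule bind_cong[OF refl])
    fix s assume s: "s \<in> space (sample_space n \<pi>)"
    interpret Ks: prob_space "K s" using prob_space_kernel[OF s] by simp
    have "distr (joint_kernel s) \<pi> (\<lambda>z. fst z i) = distr (K s) \<pi> (\<lambda>w. s i)"
      unfolding joint_kernel_def using i s
      by (subst distr_distr)
        (auto simp: comp_def measurable_cong_sets[OF prob_space_kernel(2)[OF s] refl]
          intro!: measurable_Pair2')
    also have "\<dots> = return \<pi> (s i)"
      using s i by (intro Ks.distr_const) (auto simp: sample_space_def space_PiM)
    finally show "distr (joint_kernel s) \<pi> (\<lambda>z. fst z i) = return \<pi> (s i)" .
  qed
  also have "\<dots> = distr (sample_space n \<pi>) \<pi> (\<lambda>s. s i)"
    using i by (intro bind_return_distr'[OF ne]) simp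
  also have "\<dots> = \<pi>"
    unfolding sample_space_def using i prob_space_data by (intro distr_PiM_component) auto
  finally show ?thesis .
qed

lemma measurable_joint_law: "joint \<rightarrow>\<^sub>M M = sample_space n \<pi> \<Otimes>\<^sub>M MW \<rightarrow>\<^sub>M M"
  by (rule measurable_cong_sets[OF sets_joint_law refl])

lemma prob_space_output_law: "prob_space PW"
  unfolding output_law_def using prob_space_joint_law
  by (rule prob_space.prob_space_distr) (simp add: measurable_joint_law)

lemma sets_output_law: "sets PW = sets MW"
  unfolding output_law_def by simp

lemma prob_space_product_output_law: "prob_space (\<pi> \<Otimes>\<^sub>M PW)"
  using prob_space_data prob_space_output_law by (rule prob_space_pair)

lemma sets_product_output_law: "sets (\<pi> \<Otimes>\<^sub>M PW) = sets (\<pi> \<Otimes>\<^sub>M MW)"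
  by (rule sets_pair_measure_cong[OF refl sets_output_law])

lemma space_product_output_law: "space (\<pi> \<Otimes>\<^sub>M PW) = space \<pi> \<times> space MW"
  using sets_eq_imp_space_eq[OF sets_product_output_law] by (simp add: space_pair_measure)

lemma measurable_pair_component:
  assumes "i < n"
  shows "(\<lambda>z. (fst z i, snd z)) \<in> joint \<rightarrow>\<^sub>M \<pi> \<Otimes>\<^sub>M MW"
  using measurable_sample_component[OF assms] unfolding measurable_joint_law by measurable

lemma prob_space_pair_law:
  assumes "i < n"
  shows "prob_space (pair_law i)"
  unfolding pair_law_def using prob_space_joint_law measurable_pair_component[OF assms]
  by (rule prob_space.prob_space_distr)

lemma sets_pair_law: "sets (pair_law i) = sets (\<pi> \<Otimes>\<^sub>M PW)"
  unfolding pair_law_def sets_distr by (rule sets_product_output_law[symmetric])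

lemma product_of_marginals:
  assumes "i < n"
  shows "distr joint \<pi> (\<lambda>z. fst z i) \<Otimes>\<^sub>M distr joint MW snd = \<pi> \<Otimes>\<^sub>M PW"
  unfolding distr_joint_law_component[OF assms] output_law_def ..

lemma mi_SiW_eq_KL_divergence:
  assumes "i < n"
  shows "mi_SiW n \<pi> MW K i = KL_divergence (exp 1) (\<pi> \<Otimes>\<^sub>M PW) (pair_law i)"
  unfolding mi_SiW_def prob_space.mutual_information_def[OF prob_space_joint_law]
    product_of_marginals[OF assms] pair_law_def ..

lemma true_risk_output_law:
  assumes "integrable (\<pi> \<Otimes>\<^sub>M PW) (\<lambda>z. loss (fst z) (snd z))"
  shows "integrable PW (true_risk \<pi> loss)"
    and "(\<integral>w. true_risk \<pi> loss w \<partial>PW) = (\<integral>z. loss (fst z) (snd z) \<partial>(\<pi> \<Otimes>\<^sub>M PW))"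
proof -
  interpret \<pi>: prob_space \<pi> by (rule prob_space_data)
  interpret PW: prob_space PW by (rule prob_space_output_law)
  interpret pair_sigma_finite \<pi> PW ..
  have "integrable (\<pi> \<Otimes>\<^sub>M PW) (\<lambda>(x, w). loss x w)"
    using assms by (simp add: split_beta')
  from integrable_snd[OF this] integral_snd[OF this]
  show "integrable PW (true_risk \<pi> loss)"
    and "(\<integral>w. true_risk \<pi> loss w \<partial>PW) = (\<integral>z. loss (fst z) (snd z) \<partial>(\<pi> \<Otimes>\<^sub>M PW))"
    by (simp_all add: true_risk_def[abs_def] split_beta')
qed

lemma gen_err_eq_average:
  fixes loss :: "'s \<Rightarrow> 'w \<Rightarrow> real"
  assumes n: "1 \<le> n"
    and loss_meas: "(\<lambda>z. loss (fst z) (snd z)) \<in> borel_measurable (\<pi> \<Otimes>\<^sub>M MW)"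
    and int_product: "integrable (\<pi> \<Otimes>\<^sub>M PW) (\<lambda>z. loss (fst z) (snd z))"
    and int_pair: "\<And>i. i < n \<Longrightarrow> integrable (pair_law i) (\<lambda>z. loss (fst z) (snd z))"
  shows "gen_err n \<pi> MW K loss = (1 / real n) * (\<Sum>i<n.
           (\<integral>z. loss (fst z) (snd z) \<partial>(\<pi> \<Otimes>\<^sub>M PW)) - (\<integral>z. loss (fst z) (snd z) \<partial>pair_law i))"
proof -
  define m where "m = (\<integral>z. loss (fst z) (snd z) \<partial>(\<pi> \<Otimes>\<^sub>M PW))"
  define E where "E i = (\<integral>z. loss (fst z) (snd z) \<partial>pair_law i)" for i
  have snd_meas: "snd \<in> joint \<rightarrow>\<^sub>M MW"
    unfolding measurable_joint_law by simp
  have risk_meas: "true_risk \<pi> loss \<in> borel_measurable MW"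
    using borel_measurable_integrable[OF true_risk_output_law(1)[OF int_product]]
    unfolding measurable_cong_sets[OF sets_output_law refl] .
  have int_risk: "integrable joint (\<lambda>z. true_risk \<pi> loss (snd z))"
    and integral_risk: "(\<integral>z. true_risk \<pi> loss (snd z) \<partial>joint) = m"
    using true_risk_output_law[OF int_product] integrable_distr_eq[OF snd_meas risk_meas]
      integral_distr[OF snd_meas risk_meas]
    by (simp_all add: output_law_def m_def)
  have int_loss: "integrable joint (\<lambda>z. loss (fst z i) (snd z))"
    and integral_loss: "(\<integral>z. loss (fst z i) (snd z) \<partial>joint) = E i" if "i < n" for i
    using int_pair[OF that] integrable_distr_eq[OF measurable_pair_component[OF that] loss_meas]
      integral_distr[OF measurable_pair_component[OF that] loss_meas]
    by (simp_all add: pair_law_def E_def)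
  have int_sum: "integrable joint (\<lambda>z. (1 / real n) * (\<Sum>i<n. loss (fst z i) (snd z)))"
    using int_loss by (intro integrable_mult_right integrable_sum) auto
  have "gen_err n \<pi> MW K loss
      = (\<integral>z. true_risk \<pi> loss (snd z) \<partial>joint)
        - (1 / real n) * (\<Sum>i<n. \<integral>z. loss (fst z i) (snd z) \<partial>joint)"
    unfolding gen_err_def emp_risk_def Bochner_Integration.integral_diff[OF int_risk int_sum]
    using int_loss by (simp add: Bochner_Integration.integral_sum)
  also have "\<dots> = m - (1 / real n) * (\<Sum>i<n. E i)"
    using integral_risk integral_loss by simp
  also have "\<dots> = (1 / real n) * (\<Sum>i<n. m - E i)"
    using n by (simp add: sum_subtractf field_simps)
  finally show ?thesis unfolding m_def E_def .
qed

end

theorem theorem1: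
  fixes n :: nat
    and \<pi> :: "'s measure"
    and MW :: "'w measure"
    and K :: "(nat \<Rightarrow> 's) \<Rightarrow> 'w measure"
    and loss :: "'s \<Rightarrow> 'w \<Rightarrow> real"
    and \<psi>p \<psi>m :: "real \<Rightarrow> real"
    and bp bm :: ereal
  defines "J \<equiv> joint_law n \<pi> MW K"
    and "PP \<equiv> \<pi> \<Otimes>\<^sub>M output_law n \<pi> MW K"
    and "m \<equiv> (\<integral>z. loss (fst z) (snd z) \<partial>(\<pi> \<Otimes>\<^sub>M output_law n \<pi> MW K))"
  assumes n: "1 \<le> n"
    and pi: "prob_space \<pi>"
    and K: "K \<in> measurable (sample_space n \<pi>) (prob_algebra MW)"
    and loss_meas: "(\<lambda>z. loss (fst z) (snd z)) \<in> borel_measurable (\<pi> \<Otimes>\<^sub>M MW)"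
    and loss_nonneg: "\<And>x w. x \<in> space \<pi> \<Longrightarrow> w \<in> space MW \<Longrightarrow> 0 \<le> loss x w"
    \<comment> \<open>finiteness of the mutual informations I(S_i;W)\<close>
    and mi_ac: "\<And>i. i < n \<Longrightarrow> absolutely_continuous
                 (distr J \<pi> (\<lambda>z. fst z i) \<Otimes>\<^sub>M distr J MW snd)
                 (distr J (\<pi> \<Otimes>\<^sub>M MW) (\<lambda>z. (fst z i, snd z)))"
    and mi_int: "\<And>i. i < n \<Longrightarrow> integrable (distr J (\<pi> \<Otimes>\<^sub>M MW) (\<lambda>z. (fst z i, snd z)))
                 (entropy_density (exp 1) (distr J \<pi> (\<lambda>z. fst z i) \<Otimes>\<^sub>M distr J MW snd)
                    (distr J (\<pi> \<Otimes>\<^sub>M MW) (\<lambda>z. (fst z i, snd z))))"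
    \<comment> \<open>the cumulant generating function Lambda of ell(S',W') is well defined\<close>
    and loss_int: "integrable PP (\<lambda>z. loss (fst z) (snd z))"
    \<comment> \<open>upper-tail condition with psi_+\<close>
    and bp: "0 < bp"
    and psip_convex: "convex_on (dom0 bp) \<psi>p"
    and psip0: "\<psi>p 0 = 0"
    and psip_deriv: "(\<psi>p has_real_derivative 0) (at 0 within dom0 bp)"
    and cgf_p: "\<And>t. t \<in> dom0 bp \<Longrightarrow>
        integrable PP (\<lambda>z. exp (t * (loss (fst z) (snd z) - m))) \<and>
        ln (\<integral>z. exp (t * (loss (fst z) (snd z) - m)) \<partial>PP) \<le> \<psi>p t"
    \<comment> \<open>lower-tail condition with psi_-\<close>
    and bm: "0 < bm"
    and psim_convex: "convex_on (dom0 bm) \<psi>m"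
    and psim0: "\<psi>m 0 = 0"
    and psim_deriv: "(\<psi>m has_real_derivative 0) (at 0 within dom0 bm)"
    and cgf_m: "\<And>t. - t \<in> dom0 bm \<Longrightarrow>
        integrable PP (\<lambda>z. exp (t * (loss (fst z) (snd z) - m))) \<and>
        ln (\<integral>z. exp (t * (loss (fst z) (snd z) - m)) \<partial>PP) \<le> \<psi>m (- t)"
  shows "- (1 / real n) * (\<Sum>i<n. legendre_dual_inv \<psi>p bp (mi_SiW n \<pi> MW K i))
           \<le> gen_err n \<pi> MW K loss
         \<and> gen_err n \<pi> MW K loss
           \<le> (1 / real n) * (\<Sum>i<n. legendre_dual_inv \<psi>m bm (mi_SiW n \<pi> MW K i))"
proof -
  interpret learning_algorithm n \<pi> MW K by (rule learning_algorithm.intro[OF pi K])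
  let ?L = "\<lambda>z. loss (fst z) (snd z)"
  let ?E = "\<lambda>i. \<integral>z. ?L z \<partial>pair_law i"
  let ?I = "mi_SiW n \<pi> MW K"
  have loss_meas_PP: "?L \<in> borel_measurable PP"
    using loss_meas unfolding PP_def measurable_cong_sets[OF sets_product_output_law refl] .
  have loss_nonneg_PP: "0 \<le> ?L z" if "z \<in> space PP" for z
    using that loss_nonneg by (auto simp: PP_def space_product_output_law)
  have DV_setting: "prob_space PP" "prob_space (pair_law i)" "sets (pair_law i) = sets PP"
    "absolutely_continuous PP (pair_law i)"
    "integrable (pair_law i) (entropy_density (exp 1) PP (pair_law i))" if "i < n" for i
    using prob_space_product_output_law prob_space_pair_law[OF that] sets_pair_law
      mi_ac[OF that] mi_int[OF that]
    unfolding J_def PP_def product_of_marginals[OF that] pair_law_def by simp_all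
  obtain t0 where t0: "0 < t0" "t0 \<in> dom0 bp"
    using ereal_dense2[OF bp] by (force simp: dom0_def)
  have "integrable PP (\<lambda>z. exp (t0 * (?L z - m)) * exp (t0 * m))"
    using cgf_p[OF t0(2)] by simp
  then have exp_moment: "integrable PP (\<lambda>z. exp (t0 * ?L z))"
    by (simp add: right_diff_distrib exp_diff)
  have int_pair: "integrable (pair_law i) ?L" if "i < n" for i
    by (rule integrable_of_finite_KL_exp_moment[OF DV_setting[OF that] loss_meas_PP
          loss_nonneg_PP t0(1) exp_moment])
  have upper: "?E i - m \<le> legendre_dual_inv \<psi>p bp (?I i)" if "i < n" for i
    unfolding mi_SiW_eq_KL_divergence[OF that, folded PP_def] using cgf_p
    by (intro expectation_sub_le_legendre_dual_inv[OF DV_setting[OF that] loss_meas_PP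
          int_pair[OF that] bp]) auto
  have lower: "m - ?E i \<le> legendre_dual_inv \<psi>m bm (?I i)" if "i < n" for i
    unfolding mi_SiW_eq_KL_divergence[OF that, folded PP_def] using cgf_m
    by (intro sub_expectation_le_legendre_dual_inv[OF DV_setting[OF that] loss_meas_PP
          int_pair[OF that] bm]) auto
  have gen: "gen_err n \<pi> MW K loss = (1 / real n) * (\<Sum>i<n. m - ?E i)"
    unfolding m_def using gen_err_eq_average[OF n loss_meas] loss_int int_pair
    by (simp add: PP_def)
  have "- (\<Sum>i<n. legendre_dual_inv \<psi>p bp (?I i)) \<le> (\<Sum>i<n. m - ?E i)"
    unfolding sum_negf[symmetric] using upper by (intro sum_mono) force
  moreover have "(\<Sum>i<n. m - ?E i) \<le> (\<Sum>i<n. legendre_dual_inv \<psi>m bm (?I i))"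
    using lower by (intro sum_mono) force
  ultimately show ?thesis
    unfolding gen minus_mult_commute by (intro conjI mult_left_mono) simp_all
qed

end
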